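(* Let $N$ be a complex two-step nilpotent Lie algebra whose center has dimension $p=2$, with $q=\dim N-2$, and suppose the marginal rank of $N$ equals $q$. Let $(X,I)$ be a basis of $N$, $\mathcal A=\mathcal A(X,I)$, and let $\mathcal A_{\cdot\cdot i}\in\mathbb C^{q\times q}$ be the slice of $\mathcal A$ obtained by fixing the third index to $i$, $i=1,2$. If \[ \operatorname{rank}(\mathcal A_{\cdot\cdot 1})+\operatorname{rank}(\mathcal A_{\cdot\cdot 2})>q, \] then $\mathcal A$ is not in block diagonal format $(S,T)$ for any nonempty proper subset $S\subset\{1,\dots,q\}$ (and any $T\subseteq\{1,2\}$). Consequently, if this inequality holds for the representation tensor of every basis $(X,I)$ of $N$, then $N$ is indecomposable.
   Context: A basis $(X,I)$ of $N$ consists of $I=\{\mathbf y_1,\dots,\mathbf y_p\}$, a basis of the center of $N$, and $X=\{\mathbf x_1,\dots,\mathbf x_q\}$ such that $X\cup I$ is a basis of $N$. Its representation tensor $\mathcal A(X,I)=(a_{ijk})\in\mathbb C^{q\times q\times p}$ is defined by $a_{ijk}=\alpha_k$ where $[\mathbf x_i,\mathbf x_j]=\sum_{s=1}^p\alpha_s\mathbf y_s$. A tensor is in block diagonal format $(S,T)$ if its only possibly nonzero entries occur at $(i,j,k)\in (S\times S\times T)\cup(S^\complement\times S^\complement\times T^\complement)$. The marginal rank of $N$ is the rank of the $q\times pq$ matrix $[A_1,\dots,A_p]$, where $A_k$ is the $k$-th slice $(a_{ijk})_{i,j}$ of $\mathcal A(X,I)$ (independent of the basis). A Lie algebra is indecomposable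 if it is not a direct sum of two nonzero ideals. *)

theory Defs
  imports Main "Jordan_Normal_Form.DL_Rank"
begin

definition lie_algebra :: "(complex \<Rightarrow> 'v::ab_group_add \<Rightarrow> 'v) \<Rightarrow> ('v \<Rightarrow> 'v \<Rightarrow> 'v) \<Rightarrow> bool" where
  "lie_algebra sc br \<longleftrightarrow>
     vector_space sc \<and>
     (\<forall>x. Vector_Spaces.linear sc sc (br x)) \<and>
     (\<forall>y. Vector_Spaces.linear sc sc (\<lambda>x. br x y)) \<and>
     (\<forall>x. br x x = 0) \<and>
     (\<forall>x y z. br x (br y z) + br y (br z x) + br z (br x y) = 0)"

definition two_step_nilpotent :: "('v::ab_group_add \<Rightarrow> 'v \<Rightarrow> 'v) \<Rightarrow> bool" where
  "two_step_nilpotent br \<longleftrightarrow> (\<forall>x y z. br (br x y) z = 0) \<and> (\<exists>x y. br x y \<noteq> 0)"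

definition lie_center :: "('v::ab_group_add \<Rightarrow> 'v \<Rightarrow> 'v) \<Rightarrow> 'v set" where
  "lie_center br = {z. \<forall>x. br x z = 0}"

definition basis_list_of :: "(complex \<Rightarrow> 'v::ab_group_add \<Rightarrow> 'v) \<Rightarrow> 'v list \<Rightarrow> 'v set \<Rightarrow> bool" where
  "basis_list_of sc vs W \<longleftrightarrow> distinct vs \<and> \<not> module.dependent sc (set vs)
      \<and> module.span sc (set vs) = W"

text \<open>A basis (X,I) of N: ys = I is a basis of the center, xs = X such that X \<union> I is a basis of N.\<close>
definition lie_basis :: "(complex \<Rightarrow> 'v::ab_group_add \<Rightarrow> 'v) \<Rightarrow> ('v \<Rightarrow> 'v \<Rightarrow> 'v) \<Rightarrow> 'v list \<Rightarrow> 'v list \<Rightarrow> bool" where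
  "lie_basis sc br xs ys \<longleftrightarrow> basis_list_of sc ys (lie_center br) \<and> basis_list_of sc (xs @ ys) UNIV"

text \<open>A is the representation tensor A(X,I) (0-based indices):
  [x_i, x_j] = sum_k A i j k * y_k.\<close>
definition rep_tensor :: "(complex \<Rightarrow> 'v::ab_group_add \<Rightarrow> 'v) \<Rightarrow> ('v \<Rightarrow> 'v \<Rightarrow> 'v) \<Rightarrow> 'v list \<Rightarrow> 'v list
    \<Rightarrow> (nat \<Rightarrow> nat \<Rightarrow> nat \<Rightarrow> complex) \<Rightarrow> bool" where
  "rep_tensor sc br xs ys A \<longleftrightarrow>
     (\<forall>i<length xs. \<forall>j<length xs.
        br (xs ! i) (xs ! j) = (\<Sum>k<length ys. sc (A i j k) (ys ! k)))"

definition block_diag_format :: "nat \<Rightarrow> nat \<Rightarrow> (nat \<Rightarrow> nat \<Rightarrow> nat \<Rightarrow> complex) \<Rightarrow> nat set \<Rightarrow> nat set \<Rightarrow> bool" where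
  "block_diag_format q p A S T \<longleftrightarrow>
     (\<forall>i<q. \<forall>j<q. \<forall>k<p. A i j k \<noteq> 0 \<longrightarrow>
        (i \<in> S \<and> j \<in> S \<and> k \<in> T) \<or> (i \<notin> S \<and> j \<notin> S \<and> k \<notin> T))"

definition tensor_slice :: "nat \<Rightarrow> (nat \<Rightarrow> nat \<Rightarrow> nat \<Rightarrow> complex) \<Rightarrow> nat \<Rightarrow> complex mat" where
  "tensor_slice q A k = mat q q (\<lambda>(i, j). A i j k)"

text \<open>The q x pq matrix [A_1, ..., A_p].\<close>
definition marginal_matrix :: "nat \<Rightarrow> nat \<Rightarrow> (nat \<Rightarrow> nat \<Rightarrow> nat \<Rightarrow> complex) \<Rightarrow> complex mat" where
  "marginal_matrix q p A = mat q (p * q) (\<lambda>(i, c). A i (c mod q) (c div q))"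

abbreviation cmat_rank :: "complex mat \<Rightarrow> nat" where
  "cmat_rank M \<equiv> vec_space.rank (dim_row M) (M :: complex mat)"

definition lie_ideal :: "(complex \<Rightarrow> 'v::ab_group_add \<Rightarrow> 'v) \<Rightarrow> ('v \<Rightarrow> 'v \<Rightarrow> 'v) \<Rightarrow> 'v set \<Rightarrow> bool" where
  "lie_ideal sc br J \<longleftrightarrow> module.subspace sc J \<and> (\<forall>x y. y \<in> J \<longrightarrow> br x y \<in> J)"

definition lie_indecomposable :: "(complex \<Rightarrow> 'v::ab_group_add \<Rightarrow> 'v) \<Rightarrow> ('v \<Rightarrow> 'v \<Rightarrow> 'v) \<Rightarrow> bool" where
  "lie_indecomposable sc br \<longleftrightarrow>
     \<not> (\<exists>J K. lie_ideal sc br J \<and> lie_ideal sc br K \<and> J \<noteq> {0} \<and> K \<noteq> {0}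
            \<and> J \<inter> K = {0} \<and> {j + k | j k. j \<in> J \<and> k \<in> K} = UNIV)"

end

theory Submission
  imports Defs
begin

(* Block diagonal format (S,T) puts the nonzero rows of the slice A_k inside S when k \<in> T and
   inside the complement of S otherwise. If both slices lie on the same side, the marginal matrix
   has fewer than q nonzero rows, contradicting full marginal rank; if not, the two slice ranks add
   up to at most |S| + (q - |S|) = q.
   If N = J \<oplus> K for nonzero ideals J, K, then each of them meets the centre: [x, j] lies in the
   centre and in J, so an ideal meeting the centre trivially is central, hence zero. The centre is
   therefore spanned by some z1 \<in> J and z2 \<in> K, and a basis of N adapted to the decomposition,
   with I = {z1, z2}, has its tensor in block diagonal format (positions of the basis vectors from J,
   index of z1); so its slice ranks add up to at most q. *)

lemma rank_le_card_nonzero_rows: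
  fixes M :: "'a::field mat"
  assumes "finite R" "M \<in> carrier_mat n nc"
    and "\<And>i j. i < n \<Longrightarrow> j < nc \<Longrightarrow> M $$ (i, j) \<noteq> 0 \<Longrightarrow> i \<in> R"
  shows "vec_space.rank n M \<le> card R"
  using assms
proof (induction R arbitrary: M rule: finite_induct)
  case empty
  then have "M = 0\<^sub>m n nc" by (intro eq_matI) auto
  then show ?case using vec_space.rank_0I by simp
next
  case (insert a R)
  define M1 where "M1 = mat n nc (\<lambda>(r, c). if r = a then M $$ (r, c) else 0)"
  define M2 where "M2 = mat n nc (\<lambda>(r, c). if r = a then 0 else M $$ (r, c))"
  have M1: "M1 \<in> carrier_mat n nc" and M2: "M2 \<in> carrier_mat n nc"
    by (auto simp: M1_def M2_def)
  have "M = M1 + M2"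
    using insert.prems(1) by (intro eq_matI) (auto simp: M1_def M2_def)
  then have "vec_space.rank n M \<le> vec_space.rank n M1 + vec_space.rank n M2"
    using vec_space.rank_subadditive[OF M1 M2] by simp
  moreover have "vec_space.rank n M1 \<le> 1"
    by (rule vec_space.rank_le_1_product_entries[OF M1,
          of "\<lambda>r. if r = a then 1 else 0" "\<lambda>c. M $$ (a, c)"])
       (auto simp: M1_def)
  moreover have "vec_space.rank n M2 \<le> card R"
    by (rule insert.IH[OF M2]) (use insert.prems in \<open>auto simp: M2_def split: if_splits\<close>)
  ultimately show ?case using insert.hyps by simp
qed

lemma tensor_slice_rank_le:
  assumes "finite R" "\<And>i j. i < q \<Longrightarrow> j < q \<Longrightarrow> A i j k \<noteq> 0 \<Longrightarrow> i \<in> R"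
  shows "cmat_rank (tensor_slice q A k) \<le> card R"
  using rank_le_card_nonzero_rows[OF assms(1), of "tensor_slice q A k" q q] assms(2)
  by (simp add: tensor_slice_def)

lemma marginal_matrix_rank_le:
  assumes "finite R"
    and "\<And>i j k. i < q \<Longrightarrow> j < q \<Longrightarrow> k < p \<Longrightarrow> A i j k \<noteq> 0 \<Longrightarrow> i \<in> R"
  shows "cmat_rank (marginal_matrix q p A) \<le> card R"
proof -
  have "i \<in> R" if "i < q" "c < p * q" "A i (c mod q) (c div q) \<noteq> 0" for i c
    using assms(2)[OF \<open>i < q\<close> _ _ that(3)] that(1,2)
    by (simp add: less_mult_imp_div_less mult.commute)
  then show ?thesis
    using rank_le_card_nonzero_rows[OF assms(1), of "marginal_matrix q p A" q "p * q"]
    by (simp add: marginal_matrix_def)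
qed

lemma block_diag_format_nonzero_row:
  assumes "block_diag_format q p A S T" "i < q" "j < q" "k < p" "A i j k \<noteq> 0"
  shows "i \<in> S \<longleftrightarrow> k \<in> T"
  using assms unfolding block_diag_format_def by blast

lemma block_diag_format_slice_rank_sum_le:
  assumes bd: "block_diag_format q p A S T" and "k < p" "l < p" and kl: "k \<in> T \<longleftrightarrow> l \<notin> T"
  shows "cmat_rank (tensor_slice q A k) + cmat_rank (tensor_slice q A l) \<le> q"
proof -
  define rows where "rows k = {i \<in> {0..<q}. i \<in> S \<longleftrightarrow> k \<in> T}" for k
  have rank_le: "cmat_rank (tensor_slice q A k') \<le> card (rows k')" if "k' < p" for k'
  proof (rule tensor_slice_rank_le)
    show "finite (rows k')" by (simp add: rows_def)
    fix i j assume "i < q" "j < q" "A i j k' \<noteq> 0"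
    then show "i \<in> rows k'"
      using block_diag_format_nonzero_row[OF bd _ _ that] by (simp add: rows_def)
  qed
  have "card (rows k) + card (rows l) = q"
  proof -
    have "rows k \<union> rows l = {0..<q}" "rows k \<inter> rows l = {}"
      using kl by (auto simp: rows_def)
    then show ?thesis
      using card_Un_disjoint[of "rows k" "rows l"] by (simp add: rows_def)
  qed
  then show ?thesis using rank_le[OF \<open>k < p\<close>] rank_le[OF \<open>l < p\<close>] by simp
qed

lemma block_diag_format_marginal_rank_less:
  assumes bd: "block_diag_format q p A S T" and S: "S \<noteq> {}" "S \<subset> {0..<q}"
    and T: "{0..<p} \<subseteq> T \<or> {0..<p} \<inter> T = {}"
  shows "cmat_rank (marginal_matrix q p A) < q"
proof -
  obtain R where R: "R \<subset> {0..<q}"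
    and rows: "\<And>i j k. i < q \<Longrightarrow> j < q \<Longrightarrow> k < p \<Longrightarrow> A i j k \<noteq> 0 \<Longrightarrow> i \<in> R"
  proof (cases "{0..<p} \<subseteq> T")
    case True
    show thesis
    proof (rule that[OF S(2)])
      fix i j k assume "i < q" "j < q" "k < p" "A i j k \<noteq> 0"
      with block_diag_format_nonzero_row[OF bd this] True show "i \<in> S" by auto
    qed
  next
    case False
    with T have disj: "{0..<p} \<inter> T = {}" by blast
    show thesis
    proof (rule that[of "{0..<q} - S"])
      show "{0..<q} - S \<subset> {0..<q}" using S by blast
      fix i j k assume "i < q" "j < q" "k < p" "A i j k \<noteq> 0"
      with block_diag_format_nonzero_row[OF bd this] disj show "i \<in> {0..<q} - S" by auto
    qed
  qed
  have "finite R" using R finite_subset by auto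
  then have "cmat_rank (marginal_matrix q p A) \<le> card R"
    using marginal_matrix_rank_le rows by blast
  also have "card R < q"
    using psubset_card_mono[OF finite_atLeastLessThan R] by simp
  finally show ?thesis .
qed

lemma not_block_diag_format_if_slice_rank_sum_gt:
  assumes marg: "cmat_rank (marginal_matrix q 2 A) = q"
    and gt: "cmat_rank (tensor_slice q A 0) + cmat_rank (tensor_slice q A 1) > q"
    and S: "S \<noteq> {}" "S \<subset> {0..<q}"
  shows "\<not> block_diag_format q 2 A S T"
proof
  assume bd: "block_diag_format q 2 A S T"
  show False
  proof (cases "0 \<in> T \<longleftrightarrow> 1 \<in> T")
    case True
    then have "{0..<2} \<subseteq> T \<or> {0..<2} \<inter> T = {}"
      by (simp add: atLeast0_lessThan_Suc numeral_2_eq_2)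
    then show False using block_diag_format_marginal_rank_less[OF bd S] marg by simp
  next
    case False
    then show False using block_diag_format_slice_rank_sum_le[OF bd, of 0 1] gt by simp
  qed
qed

context vector_space
begin

lemma span_Un_complementary_left:
  assumes "subspace J" "subspace K" "J \<inter> K = {0}" "A \<subseteq> J" "B \<subseteq> K"
    and "v \<in> span (A \<union> B)" "v \<in> J"
  shows "v \<in> span A"
proof -
  obtain a b where ab: "a \<in> span A" "b \<in> span B" "v = a + b"
    using assms(6) by (auto simp: span_Un)
  have "a \<in> J" using ab(1) span_minimal[OF assms(4,1)] by blast
  have "b \<in> K" using ab(2) span_minimal[OF assms(5,2)] by blast
  moreover have "b = v - a" using ab(3) by simp
  then have "b \<in> J" using subspace_diff[OF assms(1) assms(7) \<open>a \<in> J\<close>] by simp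
  ultimately have "b = 0" using assms(3) by blast
  then show ?thesis using ab by simp
qed

lemma independent_Un_complementary:
  assumes J: "subspace J" and K: "subspace K" and JK: "J \<inter> K = {0}"
    and "A \<subseteq> J" "B \<subseteq> K" "independent A" "independent B"
  shows "independent (A \<union> B)"
proof
  assume "dependent (A \<union> B)"
  then obtain a where a: "a \<in> A \<union> B" "a \<in> span (A \<union> B - {a})"
    by (auto simp: dependent_def)
  have split: "A \<union> B - {a} = (A - {a}) \<union> (B - {a})" by blast
  show False
  proof (cases "a \<in> A")
    case True
    then have "a \<in> span (A - {a})"
      using span_Un_complementary_left[OF J K JK, of "A - {a}" "B - {a}"] a(2) assms(4,5)
      unfolding split by blast
    then show False using True \<open>independent A\<close> by (auto simp: dependent_def)
  next
    case False
    with a(1) have "a \<in> B" by blast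
    have "K \<inter> J = {0}" using JK by blast
    then have "a \<in> span (B - {a})"
      using span_Un_complementary_left[OF K J, of "B - {a}" "A - {a}"] a(2) \<open>a \<in> B\<close> assms(4,5)
      unfolding split by (auto simp: Un_commute)
    then show False using \<open>a \<in> B\<close> \<open>independent B\<close> by (auto simp: dependent_def)
  qed
qed

lemma representation_complementary_pair_eq_0:
  assumes J: "subspace J" and K: "subspace K" and JK: "J \<inter> K = {0}"
    and ab: "a \<in> J" "b \<in> K" "independent {a, b}"
    and v: "v \<in> span {a, b}" "v \<in> J"
  shows "representation {a, b} v b = 0"
proof -
  have "{a} \<union> {b} = {a, b}" by blast
  then have "v \<in> span {a}"
    using span_Un_complementary_left[OF J K JK, of "{a}" "{b}"] ab v by simp
  then have "representation {a, b} v = representation {a} v"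
    using representation_extend ab(3) by blast
  moreover have "a \<noteq> b"
  proof
    assume "a = b"
    with ab JK have "a = 0" by blast
    with ab(3) show False using dependent_zero by blast
  qed
  ultimately show ?thesis using representation_ne_zero by (metis singletonD)
qed

lemma subspace_basis_containing:
  assumes "subspace J" "z \<in> J" "z \<noteq> 0"
  obtains B where "z \<in> B" "B \<subseteq> J" "independent B" "span B = J"
proof -
  have "independent {z}" using assms(3) by (simp add: independent_insert)
  then obtain B where "{z} \<subseteq> B" "B \<subseteq> J" "independent B" "J \<subseteq> span B"
    using maximal_independent_subset_extend[of "{z}" J] assms(2) by blast
  then show thesis using that span_subspace[OF _ _ assms(1)] by blast
qed

end

lemma basis_list_of_length_eq:
  fixes sc :: "complex \<Rightarrow> 'v::ab_group_add \<Rightarrow> 'v"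
  assumes "vector_space sc" "basis_list_of sc vs W" "basis_list_of sc ws W"
  shows "length vs = length ws"
proof -
  interpret vector_space sc by fact
  have "dim (set ws) = card (set vs)"
    using assms dim_eq_card[of "set vs" "set ws"] by (simp add: basis_list_of_def)
  also have "dim (set ws) = card (set ws)"
    using assms dim_eq_card_independent by (simp add: basis_list_of_def)
  finally show ?thesis
    using assms(2,3) by (metis basis_list_of_def distinct_card)
qed

locale complex_lie_algebra =
  fixes sc :: "complex \<Rightarrow> 'v::ab_group_add \<Rightarrow> 'v" and br :: "'v \<Rightarrow> 'v \<Rightarrow> 'v"
  assumes lie_algebra: "lie_algebra sc br"
begin

sublocale vector_space sc
  using lie_algebra by (simp add: lie_algebra_def)

lemma bracket_add_left: "br (x + y) z = br x z + br y z"
  and bracket_add_right: "br x (y + z) = br x y + br x z"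
  and bracket_scale_right: "br x (sc c y) = sc c (br x y)"
  using lie_algebra by (auto simp: lie_algebra_def Vector_Spaces.linear_iff)

lemma bracket_zero_right: "br x 0 = 0"
  using bracket_add_right[of x 0 0] by simp

lemma bracket_antisym: "br y x = - br x y"
proof -
  have self: "br u u = 0" for u
    using lie_algebra by (simp add: lie_algebra_def)
  have "0 = br (x + y) (x + y)" by (rule self[symmetric])
  also have "\<dots> = (br x x + br y x) + (br x y + br y y)"
    by (simp only: bracket_add_left bracket_add_right)
  also have "\<dots> = br x y + br y x"
    by (simp add: self)
  finally show ?thesis by (metis add.commute eq_neg_iff_add_eq_0)
qed

lemma lie_center_subspace: "subspace (lie_center br)"
  unfolding subspace_def lie_center_def
  by (simp add: bracket_add_right bracket_scale_right bracket_zero_right)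

lemma lie_ideal_bracket_left:
  assumes "lie_ideal sc br J" "y \<in> J"
  shows "br y x \<in> J"
proof -
  have "br x y \<in> J" using assms by (simp add: lie_ideal_def)
  then show ?thesis
    using assms(1) subspace_neg by (simp add: lie_ideal_def bracket_antisym[of y x])
qed

lemma bracket_complementary_ideals_eq_0:
  assumes "lie_ideal sc br J" "lie_ideal sc br K" "J \<inter> K = {0}" "x \<in> J" "y \<in> K"
  shows "br x y = 0"
  using lie_ideal_bracket_left[OF assms(1,4)] assms(2,3,5) by (auto simp: lie_ideal_def)

end

locale two_step_nilpotent_lie_algebra = complex_lie_algebra +
  assumes two_step: "two_step_nilpotent br"
begin

lemma bracket_in_center: "br x y \<in> lie_center br"
proof -
  have "br (br x y) w = 0" for w
    using two_step by (simp add: two_step_nilpotent_def)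
  then have "br w (br x y) = 0" for w
    using bracket_antisym[of "br x y" w] by simp
  then show ?thesis by (simp add: lie_center_def)
qed

lemma lie_ideal_meets_center:
  assumes J: "lie_ideal sc br J" and "J \<noteq> {0}"
  obtains z where "z \<in> J" "z \<in> lie_center br" "z \<noteq> 0"
proof (rule ccontr)
  assume "\<not> thesis"
  with that have trivial: "J \<inter> lie_center br \<subseteq> {0}" by blast
  have "0 \<in> J" using J subspace_0 by (simp add: lie_ideal_def)
  with \<open>J \<noteq> {0}\<close> obtain j where j: "j \<in> J" "j \<noteq> 0" by blast
  have "br x j = 0" for x
  proof -
    have "br x j \<in> J \<inter> lie_center br"
      using J j(1) bracket_in_center by (simp add: lie_ideal_def)
    with trivial show ?thesis by blast
  qed
  then have "j \<in> J \<inter> lie_center br" using j(1) by (simp add: lie_center_def)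
  with trivial j(2) show False by blast
qed

lemma rep_tensor_representation:
  assumes "lie_basis sc br xs ys"
  shows "rep_tensor sc br xs ys (\<lambda>i j k. representation (set ys) (br (xs ! i) (xs ! j)) (ys ! k))"
  unfolding rep_tensor_def
proof (intro allI impI)
  fix i j
  let ?v = "br (xs ! i) (xs ! j)"
  have ys: "distinct ys" "independent (set ys)" "span (set ys) = lie_center br"
    using assms by (auto simp: lie_basis_def basis_list_of_def)
  have "(\<Sum>k<length ys. sc (representation (set ys) ?v (ys ! k)) (ys ! k))
      = (\<Sum>b\<in>set ys. sc (representation (set ys) ?v b) b)"
    using sum.reindex_bij_betw[OF bij_betw_nth[OF ys(1) refl refl]] by simp
  also have "\<dots> = ?v"
    using sum_representation_eq[OF ys(2)] bracket_in_center ys(3) by simp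
  finally show "?v = (\<Sum>k<length ys. sc (representation (set ys) ?v (ys ! k)) (ys ! k))" ..
qed

lemma lie_center_eq_span:
  assumes basis: "lie_basis sc br xs ys"
    and B: "B \<subseteq> lie_center br" "independent B" "card B = length ys"
  shows "span B = lie_center br"
proof (rule span_subspace[OF B(1) _ lie_center_subspace])
  interpret N: finite_dimensional_vector_space sc "set (xs @ ys)"
    using basis by unfold_locales (auto simp: lie_basis_def basis_list_of_def)
  have ys: "distinct ys" "independent (set ys)" "span (set ys) = lie_center br"
    using basis by (simp_all add: lie_basis_def basis_list_of_def)
  then have "dim (lie_center br) = card (set ys)"
    by (intro dim_eq_card) (metis span_span)
  with ys(1) B(3) have "card B = dim (lie_center br)" by (simp add: distinct_card)
  then show "lie_center br \<subseteq> span B"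
    using N.card_eq_dim[OF B(1)] N.finiteI_independent B(2) by blast
qed

lemma complementary_ideals_adapted_basis:
  assumes basis: "lie_basis sc br xs ys" and ys: "length ys = 2"
    and J: "lie_ideal sc br J" and K: "lie_ideal sc br K" and "J \<noteq> {0}" "K \<noteq> {0}"
    and JK: "J \<inter> K = {0}" and JK_sum: "{j + k | j k. j \<in> J \<and> k \<in> K} = UNIV"
  obtains xJ xK z1 z2 where "set xJ \<subseteq> J" "set xK \<subseteq> K" "z1 \<in> J" "z2 \<in> K"
    "lie_basis sc br (xJ @ xK) [z1, z2]"
proof -
  have JS: "subspace J" and KS: "subspace K" using J K by (simp_all add: lie_ideal_def)
  obtain z1 where z1: "z1 \<in> J" "z1 \<in> lie_center br" "z1 \<noteq> 0"
    using lie_ideal_meets_center[OF J \<open>J \<noteq> {0}\<close>] by blast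
  obtain z2 where z2: "z2 \<in> K" "z2 \<in> lie_center br" "z2 \<noteq> 0"
    using lie_ideal_meets_center[OF K \<open>K \<noteq> {0}\<close>] by blast
  obtain BJ where BJ: "z1 \<in> BJ" "BJ \<subseteq> J" "independent BJ" "span BJ = J"
    using subspace_basis_containing[OF JS z1(1,3)] by blast
  obtain BK where BK: "z2 \<in> BK" "BK \<subseteq> K" "independent BK" "span BK = K"
    using subspace_basis_containing[OF KS z2(1,3)] by blast
  have indep: "independent (BJ \<union> BK)"
    by (rule independent_Un_complementary[OF JS KS JK BJ(2) BK(2) BJ(3) BK(3)])
  have span_all: "span (BJ \<union> BK) = UNIV"
    using JK_sum by (simp add: span_Un BJ(4) BK(4))
  have disj: "BJ \<inter> BK = {}"
  proof -
    have "BJ \<inter> BK \<subseteq> {0}" using BJ(2) BK(2) JK by blast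
    moreover have "0 \<notin> BJ" using BJ(3) dependent_zero by blast
    ultimately show ?thesis by blast
  qed
  have "finite (BJ \<union> BK)"
    using independent_span_bound[of "set (xs @ ys)" "BJ \<union> BK"] indep basis
    by (simp add: lie_basis_def basis_list_of_def)
  then obtain xJ xK where xJ: "set xJ = BJ - {z1}" "distinct xJ"
    and xK: "set xK = BK - {z2}" "distinct xK"
    by (metis finite_Un finite_Diff finite_distinct_list)
  have "z1 \<noteq> z2" using disj BJ(1) BK(1) by blast
  have Z: "independent {z1, z2}"
    using independent_mono[OF indep] BJ(1) BK(1) by auto
  moreover have "span {z1, z2} = lie_center br"
    using lie_center_eq_span[OF basis _ Z] z1 z2 ys \<open>z1 \<noteq> z2\<close> by simp
  moreover have "set ((xJ @ xK) @ [z1, z2]) = BJ \<union> BK"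
    using xJ(1) xK(1) BJ(1) BK(1) by auto
  moreover have "distinct ((xJ @ xK) @ [z1, z2])"
    using xJ xK disj BJ(1) BK(1) \<open>z1 \<noteq> z2\<close> by auto
  ultimately have "lie_basis sc br (xJ @ xK) [z1, z2]"
    using \<open>z1 \<noteq> z2\<close> indep span_all by (simp add: lie_basis_def basis_list_of_def)
  then show thesis
    using that xJ(1) xK(1) BJ(2) BK(2) z1(1) z2(1) by blast
qed

lemma complementary_ideals_block_diag_format:
  assumes J: "lie_ideal sc br J" and K: "lie_ideal sc br K" and JK: "J \<inter> K = {0}"
    and xJ: "set xJ \<subseteq> J" and xK: "set xK \<subseteq> K" and z: "z1 \<in> J" "z2 \<in> K"
    and basis: "lie_basis sc br (xJ @ xK) [z1, z2]"
  shows "block_diag_format (length (xJ @ xK)) 2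
      (\<lambda>i j k. representation {z1, z2} (br ((xJ @ xK) ! i) ((xJ @ xK) ! j)) ([z1, z2] ! k))
      {0..<length xJ} {0}"
proof -
  define xs where "xs = xJ @ xK"
  define m where "m = length xJ"
  have JS: "subspace J" and KS: "subspace K" using J K by (simp_all add: lie_ideal_def)
  have KJ: "K \<inter> J = {0}" and swap: "{z2, z1} = {z1, z2}" using JK by auto
  have Z: "independent {z1, z2}" "lie_center br = span {z1, z2}"
    using basis by (simp_all add: lie_basis_def basis_list_of_def)
  have in_J: "xs ! i \<in> J" if "i < m" for i
    using that xJ nth_mem[OF that[unfolded m_def]] by (auto simp: xs_def m_def nth_append)
  have in_K: "xs ! i \<in> K" if "m \<le> i" "i < length xs" for i
    using that xK nth_mem[of "i - m" xK] by (auto simp: xs_def m_def nth_append)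
  show ?thesis
    unfolding block_diag_format_def xs_def[symmetric] m_def[symmetric]
  proof (intro allI impI)
    fix i j k :: nat assume ij: "i < length xs" "j < length xs" and "k < 2"
    let ?v = "br (xs ! i) (xs ! j)"
    assume nz: "representation {z1, z2} ?v ([z1, z2] ! k) \<noteq> 0"
    then have "?v \<noteq> 0" by (auto simp: representation_zero)
    have center: "?v \<in> span {z1, z2}" using bracket_in_center Z(2) by simp
    have k: "k = 0 \<or> k = 1" using \<open>k < 2\<close> by auto
    show "i \<in> {0..<m} \<and> j \<in> {0..<m} \<and> k \<in> {0} \<or> i \<notin> {0..<m} \<and> j \<notin> {0..<m} \<and> k \<notin> {0}"
    proof (cases "i < m")
      case True
      then have "?v \<in> J" using lie_ideal_bracket_left[OF J in_J] by blast
      have "j < m"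
        using bracket_complementary_ideals_eq_0[OF J K JK in_J[OF True] in_K] ij(2) \<open>?v \<noteq> 0\<close>
        by (meson not_le)
      moreover have "k = 0"
        using representation_complementary_pair_eq_0[OF JS KS JK z Z(1) center \<open>?v \<in> J\<close>] k nz
        by auto
      ultimately show ?thesis using True by simp
    next
      case False
      then have "?v \<in> K" using lie_ideal_bracket_left[OF K in_K] ij(1) by simp
      have "\<not> j < m"
        using bracket_complementary_ideals_eq_0[OF K J KJ in_K in_J] False ij(1) \<open>?v \<noteq> 0\<close>
        by (meson not_le)
      moreover have "k = 1"
        using representation_complementary_pair_eq_0[OF KS JS KJ z(2,1), unfolded swap,
            OF Z(1) center \<open>?v \<in> K\<close>] k nz
        by auto
      ultimately show ?thesis using False by simp
    qed
  qed
qed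

lemma complementary_ideals_block_diag_basis:
  assumes basis: "lie_basis sc br xs ys" and ys: "length ys = 2"
    and J: "lie_ideal sc br J" and K: "lie_ideal sc br K" and "J \<noteq> {0}" "K \<noteq> {0}"
    and JK: "J \<inter> K = {0}" and "{j + k | j k. j \<in> J \<and> k \<in> K} = UNIV"
  obtains xs' ys' A' m where "lie_basis sc br xs' ys'" "rep_tensor sc br xs' ys' A'"
    "block_diag_format (length xs) 2 A' {0..<m} {0}"
proof -
  obtain xJ xK z1 z2 where adapted: "set xJ \<subseteq> J" "set xK \<subseteq> K" "z1 \<in> J" "z2 \<in> K"
    and basis': "lie_basis sc br (xJ @ xK) [z1, z2]"
    using complementary_ideals_adapted_basis[OF assms] by blast
  have "length (xJ @ xK) = length xs"
    using basis_list_of_length_eq[OF vector_space_axioms, of "xs @ ys" UNIV "(xJ @ xK) @ [z1, z2]"]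
      basis basis' ys by (simp add: lie_basis_def)
  then show thesis
    using that[OF basis' rep_tensor_representation[OF basis']]
      complementary_ideals_block_diag_format[OF J K JK adapted basis'] by simp
qed

end

theorem lemma6:
  fixes sc :: "complex \<Rightarrow> 'v::ab_group_add \<Rightarrow> 'v"
    and br :: "'v \<Rightarrow> 'v \<Rightarrow> 'v"
    and xs ys :: "'v list" and q :: nat
    and A :: "nat \<Rightarrow> nat \<Rightarrow> nat \<Rightarrow> complex"
  assumes lie: "lie_algebra sc br"
    and nil: "two_step_nilpotent br"
    and basis: "lie_basis sc br xs ys"
    and p2: "length ys = 2"
    and q: "length xs = q"
    and tensor: "rep_tensor sc br xs ys A"
    and marg: "cmat_rank (marginal_matrix q 2 A) = q"
  shows "(cmat_rank (tensor_slice q A 0) + cmat_rank (tensor_slice q A 1) > q \<longrightarrow>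
           (\<forall>S T. S \<noteq> {} \<and> S \<subset> {0..<q} \<and> T \<subseteq> {0..<2} \<longrightarrow>
                  \<not> block_diag_format q 2 A S T))
       \<and> ((\<forall>xs' ys' A'. lie_basis sc br xs' ys' \<and> rep_tensor sc br xs' ys' A' \<longrightarrow>
              cmat_rank (tensor_slice q A' 0) + cmat_rank (tensor_slice q A' 1) > q)
           \<longrightarrow> lie_indecomposable sc br)"
proof (intro conjI impI allI)
  fix S T :: "nat set"
  assume "cmat_rank (tensor_slice q A 0) + cmat_rank (tensor_slice q A 1) > q"
    and "S \<noteq> {} \<and> S \<subset> {0..<q} \<and> T \<subseteq> {0..<2}"
  then show "\<not> block_diag_format q 2 A S T"
    using not_block_diag_format_if_slice_rank_sum_gt[OF marg] by blast
next
  assume rank_gt: "\<forall>xs' ys' A'. lie_basis sc br xs' ys' \<and> rep_tensor sc br xs' ys' A' \<longrightarrow>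
    cmat_rank (tensor_slice q A' 0) + cmat_rank (tensor_slice q A' 1) > q"
  interpret two_step_nilpotent_lie_algebra sc br
    using lie nil by unfold_locales
  show "lie_indecomposable sc br"
    unfolding lie_indecomposable_def
  proof
    assume "\<exists>J K. lie_ideal sc br J \<and> lie_ideal sc br K \<and> J \<noteq> {0} \<and> K \<noteq> {0}
      \<and> J \<inter> K = {0} \<and> {j + k | j k. j \<in> J \<and> k \<in> K} = UNIV"
    then obtain J K where "lie_ideal sc br J" "lie_ideal sc br K" "J \<noteq> {0}" "K \<noteq> {0}"
      "J \<inter> K = {0}" "{j + k | j k. j \<in> J \<and> k \<in> K} = UNIV"
      by blast
    then obtain xs' ys' A' m where "lie_basis sc br xs' ys'" "rep_tensor sc br xs' ys' A'"
      and bd: "block_diag_format (length xs) 2 A' {0..<m} {0}"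
      by (rule complementary_ideals_block_diag_basis[OF basis p2])
    then have "cmat_rank (tensor_slice q A' 0) + cmat_rank (tensor_slice q A' 1) > q"
      using rank_gt by blast
    moreover have "cmat_rank (tensor_slice q A' 0) + cmat_rank (tensor_slice q A' 1) \<le> q"
      using block_diag_format_slice_rank_sum_le[OF bd[unfolded q], of 0 1] by simp
    ultimately show False by simp
  qed
qed

end
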